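(* Let $\mathcal{S}$ be a state space and let $\mathsf{M}^{(1)},\mathsf{M}^{(2)}$ be dichotomic measurements on $\mathcal{S}$. If $\bar P(\mathsf{M}^{(1)},\mathsf{M}^{(2)})<1$, then $\mathsf{M}^{(1)}$ and $\mathsf{M}^{(2)}$ are not maximally incompatible.
   Context: General probabilistic theory setting: a state space $\mathcal{S}$ is a compact convex subset of a finite-dimensional real vector space, embedded as a base of a closed generating proper cone in a vector space $V$, with unit effect $u$. Effects are linear functionals $e$ on $V$ with $0\le e\le1$ on $\mathcal{S}$; $\|f\|=\max_{s\in\mathcal{S}}|f(s)|$. A measurement with finite outcome set $\Omega$ is a map $x\mapsto\mathsf{M}_x$ to effects with $\sum_x\mathsf{M}_x=u$; a dichotomic measurement has outcome set $\{+,-\}$. For dichotomic $\mathsf{M}^{(1)},\mathsf{M}^{(2)}$, $\bar P(\mathsf{M}^{(1)},\mathsf{M}^{(2)})=\frac18\sum_{x,y\in\{+,-\}}\|\mathsf{M}^{(1)}_x+\mathsf{M}^{(2)}_y\|$. A measurement $\mathsf{T}$ is trivial if $\mathsf{T}_x=p_xu$ for a probability distribution $(p_x)$. Two measurements with outcome sets $\Omega_1,\Omega_2$ are compatible if there is a measurement $\mathsf{J}$ on $\Omega_1\times\Omega_2$ whose marginals are the two measurements. The degree of incompatibility $d(\mathsf{M}^{(1)},\mathsf{M}^{(2)})$ is the maximal $\lambda\in[0,1]$ such that $\lambda\mathsf{M}^{(1)}+(1-\lambda)\mathsf{T}^{(1)}$ and $\lambda\mathsf{M}^{(2)}+(1-\lambda)\mathsf{T}^{(2)}$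 are compatible for some trivial measurements $\mathsf{T}^{(1)},\mathsf{T}^{(2)}$; it always satisfies $d\ge\frac12$, and the measurements are maximally incompatible if $d(\mathsf{M}^{(1)},\mathsf{M}^{(2)})=\frac12$. *)

theory Defs
  imports "HOL-Analysis.Analysis"
begin

text \<open>A state space S is a compact convex set which is a base of the
  closed, generating, proper cone K = cone hull S, with unit effect u (linear, u = 1 on S,
  u > 0 on K minus 0, and S = K intersected with the hyperplane u = 1).\<close>

definition state_space :: "'v::euclidean_space set \<Rightarrow> ('v \<Rightarrow> real) \<Rightarrow> bool" where
  "state_space S u \<longleftrightarrow>
     S \<noteq> {} \<and> compact S \<and> convex S \<and> linear u \<and>
     closed (cone hull S) \<and>
     (cone hull S) \<inter> uminus ` (cone hull S) = {0} \<and>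
     {x - y | x y. x \<in> cone hull S \<and> y \<in> cone hull S} = UNIV \<and>
     (\<forall>x \<in> cone hull S. x \<noteq> 0 \<longrightarrow> u x > 0) \<and>
     S = {x \<in> cone hull S. u x = 1}"

definition effect :: "'v::euclidean_space set \<Rightarrow> ('v \<Rightarrow> real) \<Rightarrow> bool" where
  "effect S e \<longleftrightarrow> linear e \<and> (\<forall>s\<in>S. 0 \<le> e s \<and> e s \<le> 1)"

definition fnorm :: "'v::euclidean_space set \<Rightarrow> ('v \<Rightarrow> real) \<Rightarrow> real" where
  "fnorm S f = (SUP s\<in>S. \<bar>f s\<bar>)"

definition measurement ::
  "'v::euclidean_space set \<Rightarrow> ('v \<Rightarrow> real) \<Rightarrow> 'x set \<Rightarrow> ('x \<Rightarrow> 'v \<Rightarrow> real) \<Rightarrow> bool" where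
  "measurement S u \<Omega> M \<longleftrightarrow> finite \<Omega> \<and> (\<forall>x\<in>\<Omega>. effect S (M x)) \<and>
     (\<lambda>v. \<Sum>x\<in>\<Omega>. M x v) = u"

text \<open>Dichotomic measurements: outcome set bool (True = +, False = -).\<close>
definition Pbar :: "'v::euclidean_space set \<Rightarrow> (bool \<Rightarrow> 'v \<Rightarrow> real) \<Rightarrow> (bool \<Rightarrow> 'v \<Rightarrow> real) \<Rightarrow> real" where
  "Pbar S M1 M2 = (1/8) * (\<Sum>x\<in>(UNIV::bool set). \<Sum>y\<in>(UNIV::bool set).
       fnorm S (\<lambda>v. M1 x v + M2 y v))"

definition trivial_meas ::
  "('v \<Rightarrow> real) \<Rightarrow> 'x set \<Rightarrow> ('x \<Rightarrow> 'v \<Rightarrow> real) \<Rightarrow> bool" where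
  "trivial_meas u \<Omega> T \<longleftrightarrow> (\<exists>p. (\<forall>x\<in>\<Omega>. 0 \<le> p x) \<and> sum p \<Omega> = 1 \<and>
     (\<forall>x\<in>\<Omega>. T x = (\<lambda>v. p x * u v)))"

definition compatible ::
  "'v::euclidean_space set \<Rightarrow> ('v \<Rightarrow> real) \<Rightarrow> 'x set \<Rightarrow> ('x \<Rightarrow> 'v \<Rightarrow> real)
     \<Rightarrow> 'y set \<Rightarrow> ('y \<Rightarrow> 'v \<Rightarrow> real) \<Rightarrow> bool" where
  "compatible S u \<Omega>1 M1 \<Omega>2 M2 \<longleftrightarrow>
     (\<exists>J. measurement S u (\<Omega>1 \<times> \<Omega>2) J \<and>
        (\<forall>x\<in>\<Omega>1. M1 x = (\<lambda>v. \<Sum>y\<in>\<Omega>2. J (x, y) v)) \<and>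
        (\<forall>y\<in>\<Omega>2. M2 y = (\<lambda>v. \<Sum>x\<in>\<Omega>1. J (x, y) v)))"

definition mix :: "real \<Rightarrow> ('x \<Rightarrow> 'v \<Rightarrow> real) \<Rightarrow> ('x \<Rightarrow> 'v \<Rightarrow> real) \<Rightarrow> 'x \<Rightarrow> 'v \<Rightarrow> real" where
  "mix l M T = (\<lambda>x v. l * M x v + (1 - l) * T x v)"

definition degree ::
  "'v::euclidean_space set \<Rightarrow> ('v \<Rightarrow> real) \<Rightarrow> 'x set \<Rightarrow> ('x \<Rightarrow> 'v \<Rightarrow> real)
     \<Rightarrow> 'y set \<Rightarrow> ('y \<Rightarrow> 'v \<Rightarrow> real) \<Rightarrow> real" where
  "degree S u \<Omega>1 M1 \<Omega>2 M2 = Sup {l \<in> {0..1}. \<exists>T1 T2. trivial_meas u \<Omega>1 T1 \<and> trivial_meas u \<Omega>2 T2 \<and>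
       compatible S u \<Omega>1 (mix l M1 T1) \<Omega>2 (mix l M2 T2)}"

definition max_incompatible ::
  "'v::euclidean_space set \<Rightarrow> ('v \<Rightarrow> real) \<Rightarrow> (bool \<Rightarrow> 'v \<Rightarrow> real) \<Rightarrow> (bool \<Rightarrow> 'v \<Rightarrow> real) \<Rightarrow> bool" where
  "max_incompatible S u M1 M2 \<longleftrightarrow> degree S u UNIV M1 UNIV M2 = 1/2"

end

(* Since Pbar is the average of the four numbers ||M1_x + M2_y|| / 2, Pbar < 1 forces
   ||M1_x + M2_y|| < 2 for some outcomes x, y. As M1_x = u - M1_(not x) on S, this means
   M1_(not x) + M2_(not y) >= g on S for some g in (0, 1]. With this slack one can write down
   a joint measurement for the mixtures of M1 and M2 with weight l = 1 / (2 - g) > 1/2 and the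
   deterministic measurements at not x and not y, so the degree of incompatibility exceeds 1/2. *)

theory Submission
  imports Defs
begin

lemma state_space_unit_effect:
  assumes "state_space S u"
  shows "linear u" and "s \<in> S \<Longrightarrow> u s = 1"
  using assms unfolding state_space_def by auto

lemma measurement_boolD:
  assumes "measurement S u UNIV M"
  shows "effect S (M x)" and "M True v + M False v = u v"
  using assms unfolding measurement_def UNIV_bool by (cases x; auto simp: fun_eq_iff add.commute)+

lemma measurementI_nonneg:
  assumes "finite \<Omega>" and "\<And>s. s \<in> S \<Longrightarrow> u s = 1"
    and "\<And>x. x \<in> \<Omega> \<Longrightarrow> linear (M x)"
    and "\<And>x s. x \<in> \<Omega> \<Longrightarrow> s \<in> S \<Longrightarrow> 0 \<le> M x s"
    and "\<And>v. (\<Sum>x\<in>\<Omega>. M x v) = u v"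
  shows "measurement S u \<Omega> M"
proof -
  have "M x s \<le> 1" if "x \<in> \<Omega>" "s \<in> S" for x s
  proof -
    have "M x s \<le> (\<Sum>y\<in>\<Omega>. M y s)"
      using assms(1,4) that by (intro member_le_sum) auto
    also have "\<dots> = 1"
      using assms(2,5) that(2) by simp
    finally show ?thesis .
  qed
  then show ?thesis
    using assms unfolding measurement_def effect_def by auto
qed

lemma abs_le_fnorm:
  assumes "\<forall>t\<in>S. \<bar>f t\<bar> \<le> B" and "s \<in> S"
  shows "\<bar>f s\<bar> \<le> fnorm S f"
  unfolding fnorm_def using assms by (intro cSUP_upper bdd_aboveI2) auto

definition deterministic_meas :: "('v \<Rightarrow> real) \<Rightarrow> 'x \<Rightarrow> 'x \<Rightarrow> 'v \<Rightarrow> real" where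
  "deterministic_meas u a = (\<lambda>x v. if x = a then u v else 0)"

lemma trivial_meas_deterministic:
  assumes "finite \<Omega>" and "a \<in> \<Omega>"
  shows "trivial_meas u \<Omega> (deterministic_meas u a)"
  unfolding trivial_meas_def deterministic_meas_def
  using assms by (intro exI[of _ "\<lambda>x. if x = a then 1 else 0"]) auto

lemma le_degree:
  assumes "l \<in> {0..1}" and "trivial_meas u \<Omega>1 T1" and "trivial_meas u \<Omega>2 T2"
    and "compatible S u \<Omega>1 (mix l M1 T1) \<Omega>2 (mix l M2 T2)"
  shows "l \<le> degree S u \<Omega>1 M1 \<Omega>2 M2"
  unfolding degree_def using assms by (intro cSup_upper bdd_aboveI[of _ 1]) auto

lemma compatible_mix_deterministic:
  fixes M1 M2 :: "bool \<Rightarrow> 'v::euclidean_space \<Rightarrow> real"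
  assumes u: "linear u" "\<And>s. s \<in> S \<Longrightarrow> u s = 1"
    and M1: "measurement S u UNIV M1" and M2: "measurement S u UNIV M2"
    and "0 \<le> l" and corner: "\<And>s. s \<in> S \<Longrightarrow> 2 * l - 1 \<le> l * (M1 a s + M2 b s)"
  shows "compatible S u UNIV (mix l M1 (deterministic_meas u a))
           UNIV (mix l M2 (deterministic_meas u b))"
proof -
  note M1 = measurement_boolD[OF M1]
  note M2 = measurement_boolD[OF M2]
  \<comment> \<open>l times the sum of the joints of (M1, deterministic b) and (deterministic a, M2),
    corrected at (a, b) so that each deterministic part gets weight 1 - l; only J (a, b) can be
    negative, and corner says it is not.\<close>
  define J where "J = (\<lambda>(x, y) v.
      l * ((if y = b then M1 x v else 0) + (if x = a then M2 y v else 0))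
      - (if x = a \<and> y = b then 2 * l - 1 else 0) * u v)"
  have marginal1: "(\<Sum>y\<in>UNIV. J (x, y) v) = mix l M1 (deterministic_meas u a) x v" for x v
    using M2(2)[of v, symmetric]
    unfolding J_def mix_def deterministic_meas_def UNIV_bool
    by (cases b) (auto simp: algebra_simps)
  have marginal2: "(\<Sum>x\<in>UNIV. J (x, y) v) = mix l M2 (deterministic_meas u b) y v" for y v
    using M1(2)[of v, symmetric]
    unfolding J_def mix_def deterministic_meas_def UNIV_bool
    by (cases a) (auto simp: algebra_simps)
  have total: "(\<Sum>p\<in>UNIV. J p v) = u v" for v
  proof -
    have "(\<Sum>p\<in>UNIV. J p v) = (\<Sum>x\<in>UNIV. \<Sum>y\<in>UNIV. J (x, y) v)"
      by (simp add: sum.cartesian_product)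
    also have "\<dots> = (\<Sum>x\<in>UNIV. mix l M1 (deterministic_meas u a) x v)"
      by (simp add: marginal1)
    also have "\<dots> = u v"
      using M1(2)[of v, symmetric] unfolding mix_def deterministic_meas_def UNIV_bool
      by (cases a) (auto simp: algebra_simps)
    finally show ?thesis .
  qed
  have "linear (J p)" for p
    using M1(1) M2(1) u(1) unfolding effect_def linear_iff J_def
    by (cases p) (auto simp: algebra_simps)
  moreover have "0 \<le> J p s" if "s \<in> S" for p s
    using M1(1) M2(1) corner[OF that] u(2)[OF that] \<open>0 \<le> l\<close> that
    unfolding effect_def J_def by (cases p) auto
  ultimately have "measurement S u UNIV J"
    using u(2) total by (intro measurementI_nonneg) auto
  then show ?thesis
    unfolding compatible_def using marginal1 marginal2 by (auto simp: fun_eq_iff)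
qed

lemma complementary_effects_lower_bound:
  fixes M1 M2 :: "bool \<Rightarrow> 'v::euclidean_space \<Rightarrow> real"
  assumes u: "\<And>s. s \<in> S \<Longrightarrow> u s = 1"
    and M1: "measurement S u UNIV M1" and M2: "measurement S u UNIV M2"
    and "s \<in> S"
  shows "2 - fnorm S (\<lambda>v. M1 x v + M2 y v) \<le> M1 (\<not> x) s + M2 (\<not> y) s"
proof -
  note M1 = measurement_boolD[OF M1]
  note M2 = measurement_boolD[OF M2]
  have "\<forall>t\<in>S. \<bar>M1 x t + M2 y t\<bar> \<le> 2"
    using M1(1)[of x] M2(1)[of y] unfolding effect_def by fastforce
  then have "\<bar>M1 x s + M2 y s\<bar> \<le> fnorm S (\<lambda>v. M1 x v + M2 y v)"
    using \<open>s \<in> S\<close> by (rule abs_le_fnorm)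
  moreover have "M1 (\<not> x) s + M1 x s = 1" and "M2 (\<not> y) s + M2 y s = 1"
    using M1(2)[of s] M2(2)[of s] u[OF \<open>s \<in> S\<close>] by (cases x; cases y; simp)+
  ultimately show ?thesis
    by linarith
qed

lemma Pbar_less_one_obtains_fnorm_less_two:
  assumes "Pbar S M1 M2 < 1"
  obtains x y where "fnorm S (\<lambda>v. M1 x v + M2 y v) < 2"
proof (rule ccontr)
  assume "\<not> thesis"
  then have ge_two: "2 \<le> fnorm S (\<lambda>v. M1 x v + M2 y v)" for x y
    using that not_le by metis
  have "1 \<le> Pbar S M1 M2"
    using ge_two[of True True] ge_two[of True False] ge_two[of False True] ge_two[of False False]
    unfolding Pbar_def UNIV_bool by simp
  with assms show False
    by simp
qed

lemma degree_gt_half_if_fnorm_less_two: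
  fixes M1 M2 :: "bool \<Rightarrow> 'v::euclidean_space \<Rightarrow> real"
  assumes "state_space S u"
    and M1: "measurement S u UNIV M1" and M2: "measurement S u UNIV M2"
    and "fnorm S (\<lambda>v. M1 x v + M2 y v) < 2"
  shows "1/2 < degree S u UNIV M1 UNIV M2"
proof -
  note u = state_space_unit_effect[OF \<open>state_space S u\<close>]
  define g where "g = min 1 (2 - fnorm S (\<lambda>v. M1 x v + M2 y v))"
  define l where "l = 1 / (2 - g)"
  have "0 < g" "g \<le> 1"
    using assms(4) unfolding g_def by auto
  then have l: "1/2 < l" "l \<le> 1" "2 * l - 1 = l * g"
    unfolding l_def by (auto simp: field_simps)
  have "2 * l - 1 \<le> l * (M1 (\<not> x) s + M2 (\<not> y) s)" if "s \<in> S" for s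
  proof -
    have "2 - fnorm S (\<lambda>v. M1 x v + M2 y v) \<le> M1 (\<not> x) s + M2 (\<not> y) s"
      by (rule complementary_effects_lower_bound[OF _ M1 M2 that]) (rule u(2))
    then have "g \<le> M1 (\<not> x) s + M2 (\<not> y) s"
      unfolding g_def by linarith
    then show ?thesis
      unfolding l(3) using l(1) by (intro mult_left_mono) auto
  qed
  then have "compatible S u UNIV (mix l M1 (deterministic_meas u (\<not> x)))
               UNIV (mix l M2 (deterministic_meas u (\<not> y)))"
    using l(1) by (intro compatible_mix_deterministic[OF u M1 M2]) auto
  then have "l \<le> degree S u UNIV M1 UNIV M2"
    using l(1,2) by (auto intro!: le_degree trivial_meas_deterministic)
  with l(1) show ?thesis
    by linarith
qed

theorem corollary2:
  fixes S :: "'v::euclidean_space set" and u :: "'v \<Rightarrow> real"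
    and M1 M2 :: "bool \<Rightarrow> 'v \<Rightarrow> real"
  assumes "state_space S u"
    and "measurement S u UNIV M1"
    and "measurement S u UNIV M2"
    and "Pbar S M1 M2 < 1"
  shows "\<not> max_incompatible S u M1 M2"
proof -
  obtain x y where "fnorm S (\<lambda>v. M1 x v + M2 y v) < 2"
    using Pbar_less_one_obtains_fnorm_less_two[OF assms(4)] .
  then have "1/2 < degree S u UNIV M1 UNIV M2"
    using assms(1-3) by (intro degree_gt_half_if_fnorm_less_two)
  then show ?thesis
    unfolding max_incompatible_def by simp
qed

end
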